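(* Let $U$ be a finite set and $\mathscr{S}$ a collection of subsets of $U$ of size at most $k$ that is closed under taking subsets. Suppose $\mathscr{C}$ and $\mathscr{C}'$ are $k$-set covers of $U$ (partitions of $U$ into members of $\mathscr{S}$), where $\mathscr{C}$ consists of $b$ sets of which $b_1$ are 1-element sets, and $\mathscr{C}'$ consists of $b'$ sets of which $b_1'$ are 1-element sets. Then there exists a $k$-set cover $\mathscr{C}''$ of $U$ (a partition of $U$ into members of $\mathscr{S}$) with $\min(b,b')$ sets and $\min(b_1,b_1')$ 1-element sets. *)

theory Defs
  imports Main "HOL-Library.Disjoint_Sets"
begin

definition set_cover :: "'a set set \<Rightarrow> 'a set \<Rightarrow> 'a set set \<Rightarrow> bool" where
  "set_cover S U C \<longleftrightarrow> partition_on U C \<and> C \<subseteq> S"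

definition singletons_of :: "'a set set \<Rightarrow> 'a set set" where
  "singletons_of C = {A \<in> C. card A = 1}"

end

theory Submission
  imports Defs
begin

text \<open>Write \<open>s(C)\<close> for the number of singletons of a cover \<open>C\<close>. Since \<open>S\<close> is closed under
  subsets, we can interpolate between two covers \<open>C\<close>, \<open>C'\<close> of \<open>U\<close>: for every \<open>t\<close> with
  \<open>|C| + max 0 (s(C') - s(C)) \<le> t \<le> |C'|\<close> there is a cover with \<open>t\<close> blocks and \<open>s(C')\<close> singletons.
  It suffices to lower \<open>|C'|\<close> by one, by induction on \<open>U\<close>: remove a block \<open>B\<close> of \<open>C'\<close>, restrict
  \<open>C\<close> to \<open>U - B\<close>, apply the induction hypothesis there, and add \<open>B\<close> back. In the tight case \<open>B\<close> is
  taken to be a singleton of \<open>C'\<close> if \<open>C'\<close> has more singletons than \<open>C\<close>, and to contain a singleton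
  of \<open>C\<close> if it has fewer, so that the restricted cover loses enough blocks or singletons.\<close>

lemma set_cover_insert_iff:
  assumes "disjnt B (\<Union>Q)"
  shows "set_cover S U (insert B Q) \<longleftrightarrow> set_cover S (U - B) Q \<and> B \<subseteq> U \<and> B \<noteq> {} \<and> B \<in> S"
  using partition_on_insert[OF assms] by (auto simp: set_cover_def)

lemma set_cover_Diff_block:
  assumes "set_cover S U C" "B \<in> C"
  shows "set_cover S (U - B) (C - {B})"
proof -
  have "disjnt B (\<Union>(C - {B}))"
    using assms unfolding set_cover_def partition_on_def disjoint_def disjnt_def by blast
  moreover have "insert B (C - {B}) = C" using assms(2) by blast
  ultimately show ?thesis using set_cover_insert_iff assms(1) by metis
qed

lemma set_cover_restrict:
  assumes "\<forall>A\<in>S. \<forall>B. B \<subseteq> A \<longrightarrow> B \<in> S" "set_cover S U C" "V \<subseteq> U"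
  shows "set_cover S V ((\<inter>) V ` C - {{}})"
  using partition_on_restrict[of U C V] assms
  by (auto simp: set_cover_def Int_absorb2)

lemma singletons_of_insert:
  "singletons_of (insert B C) = (if card B = 1 then insert B (singletons_of C) else singletons_of C)"
  by (auto simp: singletons_of_def)

lemma singletons_of_Diff:
  "singletons_of (C - {B}) = singletons_of C - {B}"
  by (auto simp: singletons_of_def)

lemma finite_singletons_of: "finite C \<Longrightarrow> finite (singletons_of C)"
  by (simp add: singletons_of_def)

lemma card_restrict_le:
  assumes "finite C"
  shows "card ((\<inter>) V ` C - {{}}) + card {A\<in>C. A \<inter> V = {}} \<le> card C"
proof -
  let ?K = "{A\<in>C. A \<inter> V = {}}"
  have "card ((\<inter>) V ` C - {{}}) \<le> card ((\<inter>) V ` (C - ?K))"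
    using assms by (intro card_mono) auto
  also have "\<dots> \<le> card (C - ?K)" using assms by (intro card_image_le) auto
  also have "\<dots> = card C - card ?K" using assms by (intro card_Diff_subset) auto
  finally show ?thesis using card_mono[OF assms, of ?K] by auto
qed

lemma card_singletons_of_restrict:
  assumes "finite C"
  shows "card (singletons_of C) \<le> card (singletons_of ((\<inter>) V ` C - {{}})) + card {A\<in>C. A \<inter> V = {}}"
proof -
  let ?K = "{A\<in>C. A \<inter> V = {}}"
  have "singletons_of C \<subseteq> singletons_of ((\<inter>) V ` C - {{}}) \<union> ?K"
    by (force simp: singletons_of_def card_1_singleton_iff)
  hence "card (singletons_of C) \<le> card (singletons_of ((\<inter>) V ` C - {{}}) \<union> ?K)"
    using assms by (intro card_mono) (auto simp: finite_singletons_of)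
  also have "\<dots> \<le> card (singletons_of ((\<inter>) V ` C - {{}})) + card ?K" by (rule card_Un_le)
  finally show ?thesis .
qed

lemma obtain_block_for_shrinking:
  assumes "finite U" "partition_on U C" "partition_on U C'"
    and "card C + (card (singletons_of C') - card (singletons_of C)) < card C'"
    and "card C + 1 \<noteq> card C' \<or> card (singletons_of C) \<noteq> card (singletons_of C')"
  obtains B where "B \<in> C'" "card C + 2 \<le> card C' + card {A\<in>C. A \<inter> (U - B) = {}}"
    "card C + card (singletons_of C') + 2
       \<le> card C' + card (singletons_of C) + (if card B = 1 then 1 else 0)"
proof -
  let ?s = "card (singletons_of C)" and ?s' = "card (singletons_of C')"
  have finC: "finite C" using finite_elements assms(1,2) by blast
  consider "card C + (?s' - ?s) + 2 \<le> card C'" | "?s < ?s'" | "?s' < ?s" "card C + 1 = card C'"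
    using assms(4,5) by linarith
  then show thesis
  proof cases
    case 1
    then have "C' \<noteq> {}" by auto
    then obtain B where "B \<in> C'" by blast
    moreover have "card C + 2 \<le> card C'" "card C + ?s' + 2 \<le> card C' + ?s" using 1 by arith+
    ultimately show thesis by (intro that) auto
  next
    case 2
    then have "singletons_of C' \<noteq> {}" by auto
    then obtain B where "B \<in> C'" "card B = 1" by (auto simp: singletons_of_def)
    moreover have "card C + 2 \<le> card C'" "card C + ?s' + 1 \<le> card C' + ?s"
      using assms(4) 2 by arith+
    ultimately show thesis by (intro that) auto
  next
    case 3
    then have "singletons_of C \<noteq> {}" by auto
    then obtain x where "{x} \<in> C" by (auto simp: singletons_of_def card_1_singleton_iff)
    moreover from this obtain B where "B \<in> C'" "x \<in> B"
      using assms(2,3) by (auto simp: partition_on_def)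
    ultimately have "{x} \<in> {A\<in>C. A \<inter> (U - B) = {}}" by auto
    hence "card {A\<in>C. A \<inter> (U - B) = {}} \<noteq> 0" using finC by auto
    then show thesis using 3 \<open>B \<in> C'\<close> by (intro that) auto
  qed
qed

lemma set_cover_remove_block:
  assumes "finite U" "set_cover S U C" "B \<in> C"
  shows "set_cover S (U - B) (C - {B})" "card (C - {B}) + 1 = card C"
    "card (singletons_of (C - {B})) + (if card B = 1 then 1 else 0) = card (singletons_of C)"
proof -
  have "finite C" using assms finite_elements by (auto simp: set_cover_def)
  then show "card (C - {B}) + 1 = card C"
    using card.remove[OF _ assms(3)] by simp
  have "B \<in> singletons_of C \<longleftrightarrow> card B = 1" using assms(3) by (simp add: singletons_of_def)
  then show "card (singletons_of (C - {B})) + (if card B = 1 then 1 else 0) = card (singletons_of C)"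
    using card.remove[of "singletons_of C" B] \<open>finite C\<close>
    by (auto simp: singletons_of_Diff finite_singletons_of)
  show "set_cover S (U - B) (C - {B})" using set_cover_Diff_block assms(2,3) .
qed

lemma set_cover_add_block:
  assumes "finite U" "set_cover S (U - B) Q" "B \<subseteq> U" "B \<noteq> {}" "B \<in> S"
  shows "set_cover S U (insert B Q)" "card (insert B Q) = card Q + 1"
    "card (singletons_of (insert B Q)) = card (singletons_of Q) + (if card B = 1 then 1 else 0)"
proof -
  have "\<Union>Q = U - B" "finite Q"
    using assms(1,2) finite_elements[of "U - B" Q] by (auto simp: set_cover_def partition_on_def)
  then have "disjnt B (\<Union>Q)" "B \<notin> Q" using assms(4) by (auto simp: disjnt_def)
  then show "set_cover S U (insert B Q)" "card (insert B Q) = card Q + 1"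
    using assms set_cover_insert_iff[OF \<open>disjnt B (\<Union>Q)\<close>] \<open>finite Q\<close> by auto
  have "B \<notin> singletons_of Q" using \<open>B \<notin> Q\<close> by (simp add: singletons_of_def)
  then show "card (singletons_of (insert B Q)) = card (singletons_of Q) + (if card B = 1 then 1 else 0)"
    using \<open>finite Q\<close> by (simp add: singletons_of_insert finite_singletons_of)
qed

lemma set_cover_shrink_step:
  assumes downward_closed: "\<forall>A\<in>S. \<forall>B. B \<subseteq> A \<longrightarrow> B \<in> S" and "finite U"
    and C: "set_cover S U C" and C': "set_cover S U C'"
    and lt: "card C + (card (singletons_of C') - card (singletons_of C)) < card C'"
    and IH: "\<And>V C1 C1' t. V \<subset> U \<Longrightarrow> set_cover S V C1 \<Longrightarrow> set_cover S V C1' \<Longrightarrow>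
      card C1 + (card (singletons_of C1') - card (singletons_of C1)) \<le> t \<Longrightarrow> t \<le> card C1' \<Longrightarrow>
      \<exists>Q. set_cover S V Q \<and> card Q = t \<and> card (singletons_of Q) = card (singletons_of C1')"
  shows "\<exists>Q. set_cover S U Q \<and> card Q = card C' - 1 \<and> card (singletons_of Q) = card (singletons_of C')"
proof (cases "card C + 1 = card C' \<and> card (singletons_of C) = card (singletons_of C')")
  case True
  then show ?thesis using C by auto
next
  case False
  then obtain B where B: "B \<in> C'" and
    many_inside: "card C + 2 \<le> card C' + card {A\<in>C. A \<inter> (U - B) = {}}" and
    few_singletons: "card C + card (singletons_of C') + 2
       \<le> card C' + card (singletons_of C) + (if card B = 1 then 1 else 0)"
    using obtain_block_for_shrinking[OF \<open>finite U\<close> _ _ lt] C C' by (auto simp: set_cover_def)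
  have "B \<subseteq> U" "B \<noteq> {}" "B \<in> S" using C' B by (auto simp: set_cover_def partition_on_def)
  define C1 where "C1 = (\<inter>) (U - B) ` C - {{}}"
  have "finite C" using C \<open>finite U\<close> finite_elements by (auto simp: set_cover_def)
  have C1: "set_cover S (U - B) C1" unfolding C1_def using set_cover_restrict[OF downward_closed C] by auto
  have "card C1 + (card (singletons_of (C' - {B})) - card (singletons_of C1)) \<le> card C' - 2"
    "2 \<le> card C'"
    using card_restrict_le[OF \<open>finite C\<close>, of "U - B"]
      card_singletons_of_restrict[OF \<open>finite C\<close>, of "U - B"]
      set_cover_remove_block(2,3)[OF \<open>finite U\<close> C' B] many_inside few_singletons
    unfolding C1_def by arith+
  then obtain Q where "set_cover S (U - B) Q" "card Q = card C' - 2"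
    "card (singletons_of Q) = card (singletons_of (C' - {B}))"
    using IH[OF _ C1 set_cover_remove_block(1)[OF \<open>finite U\<close> C' B]] \<open>B \<subseteq> U\<close> \<open>B \<noteq> {}\<close>
      set_cover_remove_block(2)[OF \<open>finite U\<close> C' B] by fastforce
  then show ?thesis
    using set_cover_add_block[OF \<open>finite U\<close> _ \<open>B \<subseteq> U\<close> \<open>B \<noteq> {}\<close> \<open>B \<in> S\<close>, of Q]
      set_cover_remove_block(3)[OF \<open>finite U\<close> C' B] \<open>2 \<le> card C'\<close>
    by (intro exI[of _ "insert B Q"]) auto
qed

lemma set_cover_exists_card:
  assumes downward_closed: "\<forall>A\<in>S. \<forall>B. B \<subseteq> A \<longrightarrow> B \<in> S" and "finite U"
    and "set_cover S U C" "set_cover S U C'"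
    and "card C + (card (singletons_of C') - card (singletons_of C)) \<le> t" "t \<le> card C'"
  shows "\<exists>Q. set_cover S U Q \<and> card Q = t \<and> card (singletons_of Q) = card (singletons_of C')"
  using assms(2-)
proof (induction U arbitrary: C C' t rule: finite_psubset_induct)
  case (psubset U)
  from psubset.prems(2-) show ?case
  proof (induction "card C' - t" arbitrary: C')
    case 0
    then show ?case by auto
  next
    case (Suc n C')
    obtain Q where Q: "set_cover S U Q" "card Q = card C' - 1"
      "card (singletons_of Q) = card (singletons_of C')"
      using set_cover_shrink_step[OF downward_closed psubset.hyps(1) psubset.prems(1) Suc.prems(1)]
        psubset.IH Suc.prems Suc.hyps(2) by fastforce
    have "n = card Q - t" "t \<le> card Q" using Q(2) Suc.hyps(2) by arith+
    then show ?case using Suc.hyps(1)[OF _ Q(1)] Q(3) Suc.prems(2) by auto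
  qed
qed

theorem lemma2:
  fixes U :: "'a set" and S :: "'a set set" and k :: nat
    and C C' :: "'a set set" and b b1 b' b1' :: nat
  assumes "finite U"
    and "\<forall>A\<in>S. A \<subseteq> U \<and> card A \<le> k"
    and "\<forall>A\<in>S. \<forall>B. B \<subseteq> A \<longrightarrow> B \<in> S"
    and "set_cover S U C" and "card C = b" and "card (singletons_of C) = b1"
    and "set_cover S U C'" and "card C' = b'" and "card (singletons_of C') = b1'"
  shows "\<exists>C''. set_cover S U C'' \<and> card C'' = min b b'
               \<and> card (singletons_of C'') = min b1 b1'"
proof -
  consider "b \<le> b'" "b1 \<le> b1'" | "b' \<le> b" "b1' \<le> b1" | "b \<le> b'" "b1' \<le> b1" | "b' \<le> b" "b1 \<le> b1'"
    by linarith
  then show ?thesis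
  proof cases
    case 1
    then show ?thesis using assms(4-6) by (auto simp: min_def)
  next
    case 2
    then show ?thesis using assms(7-9) by (auto simp: min_def)
  next
    case 3
    then show ?thesis
      using set_cover_exists_card[OF assms(3,1,4,7), of b] assms(5,6,8,9) by (auto simp: min_def)
  next
    case 4
    then show ?thesis
      using set_cover_exists_card[OF assms(3,1,7,4), of b'] assms(5,6,8,9) by (auto simp: min_def)
  qed
qed

end
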